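(* Let $p$ be a prime with $p\neq 3$, and let $C(x,y,z)=ax^3+by^3+cz^3$ with $a,b,c$ integers such that $p\nmid abc$. Then $R(C)$ is dense in $\mathbb{Q}_p$.
   Context: For an integral form $F$ in $r$ variables, $R(F)=\{F(\overline{x})/F(\overline{y}):\overline{x},\overline{y}\in\mathbb{Z}^r,\ F(\overline{y})\neq 0\}$, viewed as a subset of the field $\mathbb{Q}_p$ of $p$-adic numbers with its $p$-adic topology. *)

theory Defs
  imports "HOL-Computational_Algebra.Computational_Algebra"
begin

text \<open>p-adic valuation of a rational number x = a/b (a, b coprime, b > 0):
  v_p(x) = v_p(a) - v_p(b).  (Only used for x \<noteq> 0.)\<close>
definition padic_val_rat :: "nat \<Rightarrow> rat \<Rightarrow> int" where
  "padic_val_rat p x =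
     (case quotient_of x of (a, b) \<Rightarrow>
        int (multiplicity (int p) a) - int (multiplicity (int p) b))"

definition ratio_set :: "(int \<Rightarrow> int \<Rightarrow> int \<Rightarrow> int) \<Rightarrow> rat set" where
  "ratio_set F = {of_int (F x1 x2 x3) / of_int (F y1 y2 y3) | x1 x2 x3 y1 y2 y3.
                    F y1 y2 y3 \<noteq> 0}"

text \<open>A set of rationals is dense in Q_p.  Since Q is dense in Q_p and p-adic
  balls are open, this holds iff every p-adic ball centred at a rational q
  (radius p^(-n)) meets S, i.e. some r in S has r = q or v_p(r - q) \<ge> n.\<close>
definition padic_dense :: "nat \<Rightarrow> rat set \<Rightarrow> bool" where
  "padic_dense p S \<longleftrightarrow>
     (\<forall>q::rat. \<forall>n::int. \<exists>r\<in>S. r = q \<or> padic_val_rat p (r - q) \<ge> n)"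

end

theory Submission
  imports Defs "HOL-Number_Theory.Number_Theory"
begin

text \<open>Since \<open>F\<close> is homogeneous of degree 3 and \<open>F(pB, 0, 0) = a p\<^sup>3 B\<^sup>3\<close>, the quotient
  \<open>F(x, y, z) / F(pB, 0, 0)\<close> is \<open>p\<close>-adically close to a rational \<open>A / B\<close> as soon as
  \<open>F(x, y, z)\<close> is close to \<open>a p\<^sup>3 A B\<^sup>2\<close>; so it suffices that the values of \<open>F\<close> are dense
  in \<open>p\<int>\<^sub>p\<close>.

  First, \<open>F\<close> has a nontrivial zero modulo \<open>p\<close>. After normalising to \<open>x\<^sup>3 + \<beta> y\<^sup>3 + \<gamma> z\<^sup>3\<close>,
  the only hard case is that \<open>\<beta>\<close> and \<open>\<gamma>\<close> are non-cubes with \<open>\<beta>\<gamma>\<close> a cube; then a counting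
  argument on the three cosets of the cubes \<open>C\<close> in \<open>(\<int>/p)\<^sup>*\<close> yields \<open>v \<in> \<beta>C\<close> with
  \<open>1 + v \<in> \<beta>\<^sup>2C\<close>, which gives a zero \<open>(1, y, z)\<close>. As \<open>p \<noteq> 3\<close>, Hensel's lemma lifts this
  zero to values \<open>p\<^sup>j h\<close> of \<open>F\<close>, for any \<open>j \<ge> 1\<close> and any prescribed residue of \<open>h\<close>.
  Finally, to approximate \<open>M = p\<^sup>\<alpha> m\<close> with \<open>\<alpha> = 3t + j\<close>, \<open>1 \<le> j \<le> 3\<close>, take \<open>h \<equiv> m\<close>,
  lift a cube root \<open>s\<close> of \<open>m / h\<close> modulo a high power of \<open>p\<close>, and rescale the point
  by \<open>s p\<^sup>t\<close>.\<close>

section \<open>Cubic residues modulo a prime\<close>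

lemma prime_cong_modular_inverse:
  fixes P u :: int
  assumes "prime P" "\<not> P dvd u"
  shows "[u * modular_inverse P u = 1] (mod P)"
  using assms by (intro cong_modular_inverse1) (simp add: prime_imp_coprime_int coprime_commute)

definition cubic_residue :: "int \<Rightarrow> int \<Rightarrow> bool" where
  "cubic_residue P u \<longleftrightarrow> \<not> P dvd u \<and> (\<exists>x. [x ^ 3 = u] (mod P))"

lemma cubic_residue_not_dvd: "cubic_residue P u \<Longrightarrow> \<not> P dvd u"
  by (simp add: cubic_residue_def)

lemma cubic_residue_cong:
  assumes "cubic_residue P u" "[u = v] (mod P)"
  shows "cubic_residue P v"
  using assms cong_dvd_iff cong_trans unfolding cubic_residue_def by metis

lemma cubic_residue_power3:
  fixes P x :: int
  assumes "prime P" "\<not> P dvd x"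
  shows "cubic_residue P (x ^ 3)"
  using assms prime_dvd_power_int unfolding cubic_residue_def by (blast intro: cong_refl)

lemma cubic_residue_mult:
  fixes P u v :: int
  assumes "prime P" "cubic_residue P u" "cubic_residue P v"
  shows "cubic_residue P (u * v)"
proof -
  obtain x y where "[x ^ 3 = u] (mod P)" "[y ^ 3 = v] (mod P)"
    using assms unfolding cubic_residue_def by blast
  then have "[(x * y) ^ 3 = u * v] (mod P)"
    by (simp add: power_mult_distrib cong_mult)
  moreover have "\<not> P dvd u * v"
    using assms prime_dvd_mult_iff unfolding cubic_residue_def by blast
  ultimately show ?thesis
    unfolding cubic_residue_def by blast
qed

lemma cubic_residue_mult_cancel:
  fixes P u v :: int
  assumes "prime P" "cubic_residue P u" "cubic_residue P (u * v)"
  shows "cubic_residue P v"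
proof -
  obtain x y where x: "[x ^ 3 = u] (mod P)" and y: "[y ^ 3 = u * v] (mod P)"
    using assms unfolding cubic_residue_def by blast
  have "\<not> P dvd x ^ 3"
    using x assms(2) cong_dvd_iff cubic_residue_not_dvd by blast
  then have "\<not> P dvd x"
    by (metis dvd_power dvd_trans zero_less_numeral)
  define x' where "x' = modular_inverse P x"
  have x': "[x * x' = 1] (mod P)"
    unfolding x'_def using assms(1) \<open>\<not> P dvd x\<close> by (rule prime_cong_modular_inverse)
  have "[(y * x') ^ 3 = (u * v) * x' ^ 3] (mod P)"
    using y by (simp add: power_mult_distrib cong_mult)
  also have "(u * v) * x' ^ 3 = v * (u * x' ^ 3)"
    by simp
  also have "[v * (u * x' ^ 3) = v * (x * x') ^ 3] (mod P)"
    using x by (simp add: power_mult_distrib cong_mult cong_sym)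
  also have "[v * (x * x') ^ 3 = v * 1 ^ 3] (mod P)"
    using x' by (intro cong_mult cong_pow cong_refl)
  finally show ?thesis
    using assms cubic_residue_not_dvd prime_dvd_mult_iff unfolding cubic_residue_def by auto
qed

lemma cubic_residue_uminus:
  fixes P u :: int
  assumes "prime P" "cubic_residue P u"
  shows "cubic_residue P (- u)"
proof -
  have "cubic_residue P ((- 1) ^ 3)"
    using assms(1) by (intro cubic_residue_power3) (auto simp: prime_int_iff)
  from cubic_residue_mult[OF assms(1) this assms(2)] show ?thesis
    by simp
qed

lemma cubic_residue_mult_power3_iff:
  fixes P u w :: int
  assumes "prime P" "\<not> P dvd w"
  shows "cubic_residue P (w ^ 3 * u) \<longleftrightarrow> cubic_residue P u"
  using cubic_residue_mult cubic_residue_mult_cancel cubic_residue_power3 assms by blast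

lemma prime_int_primitive_root:
  fixes P :: int
  assumes "prime P"
  obtains g where "\<And>u. \<not> P dvd u \<Longrightarrow> \<exists>i. [g ^ i = u] (mod P)"
proof -
  define p where "p = nat P"
  have P: "P = int p" and p: "prime p"
    using assms prime_ge_0_int by (auto simp: p_def prime_nat_iff_prime)
  then have "p > 1"
    using prime_gt_1_nat by blast
  obtain g where g: "residue_primroot p g"
    using prime_primitive_root_exists[OF \<open>p > 1\<close> p] by blast
  have "\<exists>i. [int g ^ i = u] (mod P)" if u: "\<not> P dvd u" for u
  proof -
    define x where "x = nat (u mod P)"
    have x: "[int x = u] (mod P)"
      using \<open>p > 1\<close> by (simp add: x_def P cong_def)
    then have "\<not> p dvd x"
      using u cong_dvd_iff P by (metis int_dvd_int_iff)
    moreover have "x < p"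
      using \<open>p > 1\<close> by (simp add: x_def P nat_less_iff)
    ultimately have "x \<in> totatives p"
      using p by (auto simp: totatives_prime intro: Nat.gr0I)
    then obtain i where "x = g ^ i mod p"
      using residue_primroot_is_generator[OF \<open>p > 1\<close> g] by (auto simp: bij_betw_def)
    then have "[int g ^ i = int x] (mod P)"
      unfolding P by (metis cong_int_iff cong_mod_right cong_refl of_nat_power)
    then show ?thesis
      using x cong_trans by blast
  qed
  then show ?thesis
    using that by blast
qed

lemma cubic_residue_trichotomy:
  fixes P \<beta> u :: int
  assumes "prime P" "\<not> P dvd \<beta>" "\<not> cubic_residue P \<beta>" "\<not> P dvd u"
  shows "cubic_residue P u \<or> cubic_residue P (\<beta> * u) \<or> cubic_residue P (\<beta>\<^sup>2 * u)"
proof -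
  obtain g where g: "\<And>u. \<not> P dvd u \<Longrightarrow> \<exists>i. [g ^ i = u] (mod P)"
    using prime_int_primitive_root[OF assms(1)] by blast
  have cube_if_3_dvd: "cubic_residue P v" if "[g ^ i = v] (mod P)" "3 dvd i" "\<not> P dvd v" for i v
  proof -
    obtain l where "i = l * 3"
      using \<open>3 dvd i\<close> by (auto elim: dvdE simp: mult.commute)
    then have "[(g ^ l) ^ 3 = v] (mod P)"
      using that(1) by (simp add: power_mult)
    then show ?thesis
      using that(3) unfolding cubic_residue_def by blast
  qed
  obtain m k where m: "[g ^ m = \<beta>] (mod P)" and k: "[g ^ k = u] (mod P)"
    using g assms(2,4) by blast
  have "\<not> 3 dvd m"
    using cube_if_3_dvd[OF m] assms(2,3) by blast
  then have "3 dvd k \<or> 3 dvd k + 1 * m \<or> 3 dvd k + 2 * m"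
    by presburger
  then obtain i :: nat where i: "i = 0 \<or> i = 1 \<or> i = 2" and "3 dvd k + i * m"
    by (metis add.right_neutral mult_zero_left)
  have "g ^ (k + i * m) = (g ^ m) ^ i * g ^ k"
    by (simp add: power_add mult.commute flip: power_mult)
  then have "[g ^ (k + i * m) = \<beta> ^ i * u] (mod P)"
    using m k by (simp add: cong_mult cong_pow)
  moreover have "\<not> P dvd \<beta> ^ i * u"
    using assms prime_dvd_mult_iff prime_dvd_power_int by blast
  ultimately have "cubic_residue P (\<beta> ^ i * u)"
    using cube_if_3_dvd \<open>3 dvd k + i * m\<close> by blast
  then show ?thesis
    using i by auto
qed

section \<open>Cube classes and a counting argument\<close>

text \<open>Representatives in \<open>{0..<P}\<close> of the coset \<open>\<gamma>\<inverse>C\<close>, where \<open>C\<close> is the group of nonzero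
  cubes mod \<open>P\<close>.\<close>

definition cube_class :: "int \<Rightarrow> int \<Rightarrow> int set" where
  "cube_class P \<gamma> = {v \<in> {0..<P}. cubic_residue P (\<gamma> * v)}"

lemma finite_cube_class [simp]: "finite (cube_class P \<gamma>)"
  by (rule finite_subset[of _ "{0..<P}"]) (auto simp: cube_class_def)

lemma cube_class_cong_imp_eq:
  assumes "v \<in> cube_class P \<gamma>" "w \<in> cube_class P \<delta>" "[v = w] (mod P)"
  shows "v = w"
  using assms cong_less_imp_eq_int unfolding cube_class_def by auto

lemma card_cube_class_le:
  fixes P \<gamma> \<delta> :: int
  assumes P: "prime P" and "\<not> P dvd \<gamma>" "\<not> P dvd \<delta>"
  shows "card (cube_class P \<gamma>) \<le> card (cube_class P \<delta>)"
proof -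
  define \<delta>' where "\<delta>' = modular_inverse P \<delta>"
  have \<delta>': "[\<delta> * \<delta>' = 1] (mod P)"
    unfolding \<delta>'_def using P assms(3) by (rule prime_cong_modular_inverse)
  then have "\<not> P dvd \<delta>'"
    using P by (metis cong_dvd_iff dvd_mult not_prime_unit)
  then have unit: "coprime (\<gamma> * \<delta>') P"
    using P assms(2) by (simp add: prime_imp_coprime_int coprime_commute prime_dvd_mult_iff)
  define f where "f v = \<gamma> * \<delta>' * v mod P" for v
  show ?thesis
  proof (rule card_inj_on_le[of f])
    show "inj_on f (cube_class P \<gamma>)"
      by (rule inj_onI, rule cube_class_cong_imp_eq)
        (use unit in \<open>auto simp: f_def cong_mult_lcancel simp flip: cong_def\<close>)
    show "f ` cube_class P \<gamma> \<subseteq> cube_class P \<delta>"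
    proof
      fix w assume "w \<in> f ` cube_class P \<gamma>"
      then obtain v where v: "v \<in> cube_class P \<gamma>" and w: "w = f v"
        by blast
      have "[\<delta> * w = (\<delta> * \<delta>') * (\<gamma> * v)] (mod P)"
        unfolding w f_def by (simp add: cong_mult cong_mod_left ac_simps)
      also have "[(\<delta> * \<delta>') * (\<gamma> * v) = 1 * (\<gamma> * v)] (mod P)"
        using \<delta>' by (intro cong_mult cong_refl)
      finally have "cubic_residue P (\<delta> * w)"
        using v cubic_residue_cong cong_sym unfolding cube_class_def by fastforce
      then show "w \<in> cube_class P \<delta>"
        using P prime_gt_0_int by (simp add: cube_class_def w f_def)
    qed
  qed simp
qed

lemma card_cube_class_shift_reflect:
  fixes P \<gamma> \<delta> :: int
  assumes P: "prime P"
  shows "card {v \<in> cube_class P \<gamma>. cubic_residue P (\<delta> * (1 + v))}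
    \<le> card {w \<in> cube_class P \<delta>. cubic_residue P (\<gamma> * (1 + w))}"
proof -
  define f where "f v = - (1 + v) mod P" for v
  show ?thesis
  proof (rule card_inj_on_le[of f])
    show "inj_on f {v \<in> cube_class P \<gamma>. cubic_residue P (\<delta> * (1 + v))}"
    proof (rule inj_onI)
      fix v1 v2
      assume v: "v1 \<in> {v \<in> cube_class P \<gamma>. cubic_residue P (\<delta> * (1 + v))}"
        "v2 \<in> {v \<in> cube_class P \<gamma>. cubic_residue P (\<delta> * (1 + v))}" and "f v1 = f v2"
      then have "[- (1 + v1) = - (1 + v2)] (mod P)"
        by (simp add: f_def cong_def)
      then have "[v1 = v2] (mod P)"
        by (metis cong_add_lcancel cong_minus_minus_iff)
      then show "v1 = v2"
        using v cube_class_cong_imp_eq by blast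
    qed
    show "f ` {v \<in> cube_class P \<gamma>. cubic_residue P (\<delta> * (1 + v))}
      \<subseteq> {w \<in> cube_class P \<delta>. cubic_residue P (\<gamma> * (1 + w))}"
    proof clarify
      fix v
      assume v: "v \<in> cube_class P \<gamma>" "cubic_residue P (\<delta> * (1 + v))"
      have w: "[f v = - (1 + v)] (mod P)"
        by (simp add: f_def cong_def)
      have "[- (\<delta> * (1 + v)) = \<delta> * f v] (mod P)"
        using cong_scalar_left[OF w, of \<delta>] by (metis cong_sym mult_minus_right)
      then have "cubic_residue P (\<delta> * f v)"
        using cubic_residue_uminus[OF P v(2)] cubic_residue_cong by blast
      moreover
      have "[1 + f v = - v] (mod P)"
        using cong_add[OF cong_refl[of 1] w] by simp
      then have "[- (\<gamma> * v) = \<gamma> * (1 + f v)] (mod P)"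
        by (metis cong_scalar_left cong_sym mult_minus_right)
      then have "cubic_residue P (\<gamma> * (1 + f v))"
        using v(1) cubic_residue_uminus[OF P] cubic_residue_cong unfolding cube_class_def by blast
      ultimately show "f v \<in> cube_class P \<delta> \<and> cubic_residue P (\<gamma> * (1 + f v))"
        using P prime_gt_0_int by (simp add: cube_class_def f_def)
    qed
  qed simp
qed

lemma cube_class_invert:
  fixes P \<gamma> v w :: int
  assumes P: "prime P" and v: "v \<in> cube_class P \<gamma>" "cubic_residue P (\<gamma> * (1 + v))"
    and w: "[v * w = - (1 + v)] (mod P)"
  shows "[v * (1 + w) = - 1] (mod P)" "cubic_residue P w" "cubic_residue P (\<gamma>\<^sup>2 * (1 + w))"
proof -
  have \<gamma>v: "cubic_residue P (\<gamma> * v)"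
    using v(1) unfolding cube_class_def by blast
  then have "\<not> P dvd \<gamma>"
    using cubic_residue_not_dvd by fastforce
  show vw: "[v * (1 + w) = - 1] (mod P)"
    using cong_add[OF cong_refl[of v] w] by (simp add: algebra_simps)
  have "[- (\<gamma> * (1 + v)) = \<gamma> * v * w] (mod P)"
    using cong_scalar_left[OF w, of \<gamma>] by (metis cong_sym mult.assoc mult_minus_right)
  then have "cubic_residue P (\<gamma> * v * w)"
    using cubic_residue_uminus[OF P v(2)] cubic_residue_cong by blast
  then show "cubic_residue P w"
    using cubic_residue_mult_cancel[OF P \<gamma>v] by simp
  have "[- (\<gamma> ^ 3) = \<gamma> * v * (\<gamma>\<^sup>2 * (1 + w))] (mod P)"
    using cong_scalar_left[OF vw, of "\<gamma> ^ 3"]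
    by (simp add: cong_sym power2_eq_square power3_eq_cube ac_simps)
  then have "cubic_residue P (\<gamma> * v * (\<gamma>\<^sup>2 * (1 + w)))"
    using cubic_residue_uminus[OF P cubic_residue_power3[OF P \<open>\<not> P dvd \<gamma>\<close>]] cubic_residue_cong
    by blast
  then show "cubic_residue P (\<gamma>\<^sup>2 * (1 + w))"
    using cubic_residue_mult_cancel[OF P \<gamma>v] by blast
qed

lemma card_cube_class_shift_invert:
  fixes P \<gamma> :: int
  assumes P: "prime P"
  shows "card {v \<in> cube_class P \<gamma>. cubic_residue P (\<gamma> * (1 + v))}
    \<le> card {w \<in> cube_class P 1. cubic_residue P (\<gamma>\<^sup>2 * (1 + w))}"
proof -
  define f where "f v = - (1 + v) * modular_inverse P v mod P" for v
  have f: "[v * f v = - (1 + v)] (mod P)" if "v \<in> cube_class P \<gamma>" for v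
  proof -
    have "\<not> P dvd v"
      using that cubic_residue_not_dvd unfolding cube_class_def by fastforce
    have "[v * f v = - (1 + v) * (v * modular_inverse P v)] (mod P)"
      unfolding f_def by (simp add: cong_scalar_left ac_simps)
    also have "[- (1 + v) * (v * modular_inverse P v) = - (1 + v) * 1] (mod P)"
      using prime_cong_modular_inverse[OF P \<open>\<not> P dvd v\<close>] by (rule cong_scalar_left)
    finally show ?thesis
      by simp
  qed
  show ?thesis
  proof (rule card_inj_on_le[of f])
    show "inj_on f {v \<in> cube_class P \<gamma>. cubic_residue P (\<gamma> * (1 + v))}"
    proof (rule inj_onI)
      fix v1 v2
      assume v: "v1 \<in> {v \<in> cube_class P \<gamma>. cubic_residue P (\<gamma> * (1 + v))}"
        "v2 \<in> {v \<in> cube_class P \<gamma>. cubic_residue P (\<gamma> * (1 + v))}" and "f v1 = f v2"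
      have "[v1 * (1 + f v1) = - 1] (mod P)" "[v2 * (1 + f v2) = - 1] (mod P)"
        using v(1,2) cube_class_invert(1)[OF P _ _ f] by blast+
      then have "[v1 * (1 + f v1) = v2 * (1 + f v1)] (mod P)"
        using \<open>f v1 = f v2\<close> by (metis cong_sym cong_trans)
      moreover have "coprime (1 + f v1) P"
        using \<open>[v1 * (1 + f v1) = - 1] (mod P)\<close> P
        by (metis cong_dvd_iff dvd_minus_iff dvd_mult not_prime_unit prime_imp_coprime_int
            coprime_commute)
      ultimately have "[v1 = v2] (mod P)"
        using cong_mult_rcancel by blast
      then show "v1 = v2"
        using v cube_class_cong_imp_eq by blast
    qed
    show "f ` {v \<in> cube_class P \<gamma>. cubic_residue P (\<gamma> * (1 + v))}
      \<subseteq> {w \<in> cube_class P 1. cubic_residue P (\<gamma>\<^sup>2 * (1 + w))}"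
      using cube_class_invert(2,3)[OF P _ _ f] P prime_gt_0_int
      by (auto simp: cube_class_def f_def)
  qed simp
qed

lemma minus_one_mem_cube_class:
  fixes P :: int
  assumes P: "prime P"
  shows "P - 1 \<in> cube_class P 1"
proof -
  have "cubic_residue P (- 1)"
    using cubic_residue_power3[OF P, of "- 1"] P by (simp add: prime_int_iff)
  then have "cubic_residue P (P - 1)"
    by (rule cubic_residue_cong) (simp add: cong_iff_dvd_diff)
  then show ?thesis
    using P prime_gt_0_int by (simp add: cube_class_def)
qed

lemma not_cubic_residue_sq_mult_and_mult:
  fixes P \<beta> u :: int
  assumes P: "prime P" and "\<not> cubic_residue P \<beta>"
  shows "\<not> (cubic_residue P (\<beta>\<^sup>2 * u) \<and> cubic_residue P (\<beta> * u))"
  using cubic_residue_mult_cancel[OF P, of "\<beta> * u" \<beta>] assms(2)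
  by (metis mult.commute mult.left_commute power2_eq_square)

lemma cube_class_plus_one_not_dvd:
  fixes P \<beta> v :: int
  assumes P: "prime P" and \<beta>: "\<not> P dvd \<beta>" "\<not> cubic_residue P \<beta>"
    and v: "v \<in> cube_class P (\<beta>\<^sup>2)"
  shows "\<not> P dvd 1 + v"
proof
  assume "P dvd 1 + v"
  then have "[\<beta>\<^sup>2 * v = \<beta>\<^sup>2 * (1 + v) - \<beta>\<^sup>2] (mod P)"
    by (simp add: algebra_simps)
  also have "[\<beta>\<^sup>2 * (1 + v) - \<beta>\<^sup>2 = 0 - \<beta>\<^sup>2] (mod P)"
    using \<open>P dvd 1 + v\<close> by (intro cong_diff cong_refl) (simp add: cong_0_iff)
  finally have "cubic_residue P (- (\<beta>\<^sup>2))"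
    using v cubic_residue_cong unfolding cube_class_def by auto
  then have "cubic_residue P (\<beta>\<^sup>2 * \<beta>) \<and> cubic_residue P (\<beta> * \<beta>)"
    using cubic_residue_uminus[OF P] cubic_residue_power3[OF P \<beta>(1)]
    by (metis minus_minus power2_eq_square power3_eq_cube mult.assoc)
  then show False
    using not_cubic_residue_sq_mult_and_mult[OF P \<beta>(2)] by blast
qed

text \<open>If there were no such \<open>v\<close>, then for every \<open>v\<close> in the class \<open>B = \<beta>C\<close> the successor \<open>1 + v\<close>
  would lie in \<open>C\<close> or in \<open>\<beta>C\<close>, and the two maps \<open>v \<mapsto> -(1 + v)\<close> and \<open>v \<mapsto> -(1 + v)/v\<close>
  above would inject \<open>B\<close> into \<open>C - {-1}\<close>; but all cube classes have the same size.\<close>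

lemma exists_shift_between_cube_classes:
  fixes P \<beta> :: int
  assumes P: "prime P" and \<beta>: "\<not> P dvd \<beta>" "\<not> cubic_residue P \<beta>"
  shows "\<exists>v. cubic_residue P (\<beta>\<^sup>2 * v) \<and> cubic_residue P (\<beta> * (1 + v))"
proof (rule ccontr)
  assume no_shift: "\<not> ?thesis"
  define B where "B = cube_class P (\<beta>\<^sup>2)"
  define C where "C = cube_class P 1"
  define B1 where "B1 = {v \<in> B. cubic_residue P (1 * (1 + v))}"
  define B2 where "B2 = {v \<in> B. cubic_residue P (\<beta>\<^sup>2 * (1 + v))}"
  define C1 where "C1 = {w \<in> C. cubic_residue P (\<beta>\<^sup>2 * (1 + w))}"
  define C2 where "C2 = {w \<in> C. cubic_residue P (\<beta> * (1 + w))}"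
  have "B \<subseteq> B1 \<union> B2"
  proof
    fix v assume v: "v \<in> B"
    then have "\<not> P dvd 1 + v"
      using cube_class_plus_one_not_dvd[OF P \<beta>] by (simp add: B_def)
    then show "v \<in> B1 \<union> B2"
      using cubic_residue_trichotomy[OF P \<beta>, of "1 + v"] no_shift v
      unfolding B1_def B2_def B_def cube_class_def by auto
  qed
  have "C1 \<inter> C2 = {}"
    using not_cubic_residue_sq_mult_and_mult[OF P \<beta>(2)] unfolding C1_def C2_def by blast
  have "P - 1 \<notin> C1 \<union> C2"
    unfolding C1_def C2_def by (auto dest: cubic_residue_not_dvd)
  then have "C1 \<union> C2 \<subset> C"
    using minus_one_mem_cube_class[OF P] unfolding C1_def C2_def C_def by blast
  have "card C \<le> card B"
    unfolding B_def C_def using P \<beta>(1) by (intro card_cube_class_le) (auto simp: prime_dvd_power_int_iff)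
  also have "\<dots> \<le> card B1 + card B2"
    using \<open>B \<subseteq> B1 \<union> B2\<close>
    by (metis B1_def B2_def B_def card_Un_le card_mono finite_Un finite_cube_class finite_subset
        le_trans mem_Collect_eq subsetI)
  also have "\<dots> \<le> card C1 + card C2"
  proof (rule add_mono)
    show "card B1 \<le> card C1"
      unfolding B1_def C1_def B_def C_def by (rule card_cube_class_shift_reflect[OF P])
    have "C2 = {w \<in> C. cubic_residue P ((\<beta>\<^sup>2)\<^sup>2 * (1 + w))}"
      using cubic_residue_mult_power3_iff[OF P \<beta>(1)]
      by (simp add: C2_def power2_eq_square power3_eq_cube mult.assoc)
    then show "card B2 \<le> card C2"
      unfolding B2_def B_def C_def by (simp only: card_cube_class_shift_invert[OF P])
  qed
  also have "\<dots> = card (C1 \<union> C2)"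
    using \<open>C1 \<inter> C2 = {}\<close> by (simp add: card_Un_disjoint C1_def C2_def C_def)
  also have "\<dots> < card C"
    using \<open>C1 \<union> C2 \<subset> C\<close> by (simp add: psubset_card_mono C_def)
  finally show False
    by simp
qed

section \<open>Nontrivial zeros of diagonal cubic forms modulo a prime\<close>

lemma cube_multiple_of_cubic_residue:
  fixes P \<beta> v :: int
  assumes P: "prime P" and \<beta>: "\<not> P dvd \<beta>" and "cubic_residue P (\<beta>\<^sup>2 * v)"
  shows "\<exists>y. [\<beta> * y ^ 3 = v] (mod P)"
proof -
  obtain t where t: "[t ^ 3 = \<beta>\<^sup>2 * v] (mod P)"
    using assms(3) unfolding cubic_residue_def by blast
  define \<beta>' where "\<beta>' = modular_inverse P \<beta>"
  have \<beta>': "[\<beta> * \<beta>' = 1] (mod P)"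
    unfolding \<beta>'_def using P \<beta> by (rule prime_cong_modular_inverse)
  have "\<beta> * (t * \<beta>') ^ 3 = \<beta> * \<beta>' ^ 3 * t ^ 3"
    by (simp add: power_mult_distrib)
  also have "[\<beta> * \<beta>' ^ 3 * t ^ 3 = \<beta> * \<beta>' ^ 3 * (\<beta>\<^sup>2 * v)] (mod P)"
    using t by (rule cong_scalar_left)
  also have "\<beta> * \<beta>' ^ 3 * (\<beta>\<^sup>2 * v) = (\<beta> * \<beta>') ^ 3 * v"
    by (simp add: power_mult_distrib power2_eq_square power3_eq_cube)
  also have "[(\<beta> * \<beta>') ^ 3 * v = 1 ^ 3 * v] (mod P)"
    using \<beta>' by (intro cong_mult cong_pow cong_refl)
  finally show ?thesis
    by auto
qed

lemma monic_diagonal_cubic_zero_of_cube_product: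
  fixes P \<beta> \<gamma> :: int
  assumes P: "prime P" and \<beta>: "\<not> P dvd \<beta>" "\<not> cubic_residue P \<beta>" and \<gamma>: "\<not> P dvd \<gamma>"
    and \<beta>\<gamma>: "cubic_residue P (\<beta> * \<gamma>)"
  shows "\<exists>y z. [1 + \<beta> * y ^ 3 + \<gamma> * z ^ 3 = 0] (mod P)"
proof -
  obtain v where v: "cubic_residue P (\<beta>\<^sup>2 * v)" "cubic_residue P (\<beta> * (1 + v))"
    using exists_shift_between_cube_classes[OF P \<beta>] by blast
  obtain y where y: "[\<beta> * y ^ 3 = v] (mod P)"
    using cube_multiple_of_cubic_residue[OF P \<beta>(1) v(1)] by blast
  have "cubic_residue P (\<beta> ^ 3 * (\<gamma>\<^sup>2 * (1 + v)))"
    using cubic_residue_mult[OF P cubic_residue_mult[OF P \<beta>\<gamma> \<beta>\<gamma>] v(2)]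
    by (simp add: power2_eq_square power3_eq_cube ac_simps)
  then have "cubic_residue P (\<gamma>\<^sup>2 * - (1 + v))"
    using cubic_residue_mult_power3_iff[OF P \<beta>(1)] cubic_residue_uminus[OF P]
    by (metis mult_minus_right)
  then obtain z where z: "[\<gamma> * z ^ 3 = - (1 + v)] (mod P)"
    using cube_multiple_of_cubic_residue[OF P \<gamma>] by blast
  have "[1 + \<beta> * y ^ 3 + \<gamma> * z ^ 3 = 1 + v + - (1 + v)] (mod P)"
    using y z by (intro cong_add cong_refl)
  then show ?thesis
    by auto
qed

lemma monic_diagonal_cubic_zero_mod_prime:
  fixes P \<beta> \<gamma> :: int
  assumes P: "prime P" and \<beta>: "\<not> P dvd \<beta>" and \<gamma>: "\<not> P dvd \<gamma>"
  shows "\<exists>x y z. \<not> (P dvd x \<and> P dvd y \<and> P dvd z) \<and> [x ^ 3 + \<beta> * y ^ 3 + \<gamma> * z ^ 3 = 0] (mod P)"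
proof -
  have P1: "\<not> P dvd 1"
    using P by (simp add: prime_int_iff)
  have minus_square: "cubic_residue P (\<delta>\<^sup>2 * - 1)" if "cubic_residue P \<delta>" for \<delta>
    using cubic_residue_uminus[OF P] cubic_residue_mult[OF P that that]
    by (simp add: power2_eq_square)
  consider "cubic_residue P \<beta>" | "cubic_residue P \<gamma>" | "cubic_residue P (\<beta>\<^sup>2 * \<gamma>)"
    | "\<not> cubic_residue P \<beta>" "cubic_residue P (\<beta> * \<gamma>)"
    using cubic_residue_trichotomy[OF P \<beta> _ \<gamma>] by blast
  then show ?thesis
  proof cases
    case 1
    then obtain y where "[\<beta> * y ^ 3 = - 1] (mod P)"
      using cube_multiple_of_cubic_residue[OF P \<beta> minus_square] by auto
    then have "[1 ^ 3 + \<beta> * y ^ 3 + \<gamma> * 0 ^ 3 = 0] (mod P)"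
      using cong_add_lcancel[of 1 "\<beta> * y ^ 3" "- 1" P] by simp
    then show ?thesis
      using P1 by blast
  next
    case 2
    then obtain z where "[\<gamma> * z ^ 3 = - 1] (mod P)"
      using cube_multiple_of_cubic_residue[OF P \<gamma> minus_square] by auto
    then have "[1 ^ 3 + \<beta> * 0 ^ 3 + \<gamma> * z ^ 3 = 0] (mod P)"
      using cong_add_lcancel[of 1 "\<gamma> * z ^ 3" "- 1" P] by simp
    then show ?thesis
      using P1 by blast
  next
    case 3
    then obtain y where "[\<beta> * y ^ 3 = - \<gamma>] (mod P)"
      using cube_multiple_of_cubic_residue[OF P \<beta>] cubic_residue_uminus[OF P] by fastforce
    then have "[0 ^ 3 + \<beta> * y ^ 3 + \<gamma> * 1 ^ 3 = 0] (mod P)"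
      using cong_add_rcancel[of "\<beta> * y ^ 3" \<gamma> "- \<gamma>" P] by simp
    then show ?thesis
      using P1 by blast
  next
    case 4
    then obtain y z where "[1 + \<beta> * y ^ 3 + \<gamma> * z ^ 3 = 0] (mod P)"
      using monic_diagonal_cubic_zero_of_cube_product[OF P \<beta> 4(1) \<gamma> 4(2)] by blast
    then have "[1 ^ 3 + \<beta> * y ^ 3 + \<gamma> * z ^ 3 = 0] (mod P)"
      by simp
    then show ?thesis
      using P1 by blast
  qed
qed

lemma diagonal_cubic_zero_mod_prime:
  fixes P a b c :: int
  assumes P: "prime P" and "\<not> P dvd a" "\<not> P dvd b" "\<not> P dvd c"
  shows "\<exists>x y z. \<not> (P dvd x \<and> P dvd y \<and> P dvd z) \<and> P dvd a * x ^ 3 + b * y ^ 3 + c * z ^ 3"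
proof -
  define a' where "a' = modular_inverse P a"
  have a': "[a * a' = 1] (mod P)"
    unfolding a'_def using P assms(2) by (rule prime_cong_modular_inverse)
  then have "\<not> P dvd a'"
    using P by (metis cong_dvd_iff dvd_mult not_prime_unit)
  then obtain x y z where nontrivial: "\<not> (P dvd x \<and> P dvd y \<and> P dvd z)"
    and zero: "[x ^ 3 + b * a' * y ^ 3 + c * a' * z ^ 3 = 0] (mod P)"
    using monic_diagonal_cubic_zero_mod_prime[OF P, of "b * a'" "c * a'"] assms(3,4) P
    by (auto simp: prime_dvd_mult_iff)
  have "[a * x ^ 3 + 1 * (b * y ^ 3) + 1 * (c * z ^ 3)
      = a * x ^ 3 + (a * a') * (b * y ^ 3) + (a * a') * (c * z ^ 3)] (mod P)"
    using a' by (intro cong_add cong_mult cong_refl) (simp_all add: cong_sym)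
  also have "a * x ^ 3 + (a * a') * (b * y ^ 3) + (a * a') * (c * z ^ 3)
      = a * (x ^ 3 + b * a' * y ^ 3 + c * a' * z ^ 3)"
    by (simp add: algebra_simps)
  also have "[a * (x ^ 3 + b * a' * y ^ 3 + c * a' * z ^ 3) = a * 0] (mod P)"
    using zero by (rule cong_scalar_left)
  finally have "P dvd a * x ^ 3 + b * y ^ 3 + c * z ^ 3"
    by (simp only: mult_1 mult_zero_right cong_0_iff)
  then show ?thesis
    using nontrivial by blast
qed

section \<open>Hensel lifting\<close>

lemma cube_hensel_step:
  fixes P A B x h e :: int and N :: nat
  assumes unit: "coprime (3 * A * x\<^sup>2) P" and "N \<ge> 1" and x: "A * x ^ 3 + B = P ^ N * h"
  shows "\<exists>t h'. A * (x + P ^ N * t) ^ 3 + B = P ^ N * h' \<and> [h' = e] (mod P)"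
proof -
  obtain c where c: "[3 * A * x\<^sup>2 * c = 1] (mod P)"
    using cong_solve_coprime_int[OF unit] by blast
  define t where "t = c * (e - h)"
  define h' where "h' = h + 3 * A * x\<^sup>2 * t + P ^ N * (3 * A * x * t\<^sup>2 + P ^ N * A * t ^ 3)"
  have "A * (x + P ^ N * t) ^ 3 + B
      = (A * x ^ 3 + B) + P ^ N * (3 * A * x\<^sup>2 * t + P ^ N * (3 * A * x * t\<^sup>2 + P ^ N * A * t ^ 3))"
    by (simp add: algebra_simps power2_eq_square power3_eq_cube)
  also have "\<dots> = P ^ N * h'"
    unfolding x h'_def by (simp add: algebra_simps)
  finally have "A * (x + P ^ N * t) ^ 3 + B = P ^ N * h'" .
  moreover have "[h' = e] (mod P)"
  proof -
    have "[P ^ N * (3 * A * x * t\<^sup>2 + P ^ N * A * t ^ 3) = 0] (mod P)"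
      using \<open>N \<ge> 1\<close> by (simp add: cong_0_iff dvd_power)
    then have "[h' = h + (3 * A * x\<^sup>2 * c) * (e - h) + 0] (mod P)"
      unfolding h'_def t_def by (intro cong_add cong_refl) (simp_all add: ac_simps)
    also have "[h + (3 * A * x\<^sup>2 * c) * (e - h) + 0 = h + 1 * (e - h) + 0] (mod P)"
      using c by (intro cong_add cong_mult cong_refl)
    finally show ?thesis
      by simp
  qed
  ultimately show ?thesis
    by blast
qed

lemma cube_hensel_lift:
  fixes P A B x0 e :: int and j :: nat
  assumes P: "prime P" "P \<noteq> 3" and A: "\<not> P dvd A" and x0: "\<not> P dvd x0"
    and zero: "P dvd A * x0 ^ 3 + B" and "j \<ge> 1"
  shows "\<exists>x h. A * x ^ 3 + B = P ^ j * h \<and> [h = e] (mod P)"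
proof -
  have "\<not> P dvd 3"
    using P primes_dvd_imp_eq[of P 3] by auto
  then have unit: "coprime (3 * A * x\<^sup>2) P" if "[x = x0] (mod P)" for x
    using that P A x0 cong_dvd_iff prime_imp_coprime_int
    by (metis coprime_commute prime_dvd_mult_iff prime_dvd_power_int)
  have lift: "\<exists>x h. [x = x0] (mod P) \<and> A * x ^ 3 + B = P ^ Suc k * h" for k
  proof (induction k)
    case 0
    then show ?case
      using zero by (auto elim!: dvdE intro: cong_refl)
  next
    case (Suc k)
    then obtain x h where x: "[x = x0] (mod P)" and h: "A * x ^ 3 + B = P ^ Suc k * h"
      by blast
    obtain t h' where t: "A * (x + P ^ Suc k * t) ^ 3 + B = P ^ Suc k * h'" and "[h' = 0] (mod P)"
      using cube_hensel_step[OF unit[OF x] _ h, of 0] by auto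
    then obtain h'' where "h' = P * h''"
      by (auto simp: cong_0_iff elim!: dvdE)
    have "[x + P ^ Suc k * t = x + 0] (mod P)"
      by (intro cong_add cong_refl) (simp add: cong_0_iff)
    then have "[x + P ^ Suc k * t = x0] (mod P)"
      using x cong_trans by simp
    moreover have "A * (x + P ^ Suc k * t) ^ 3 + B = P ^ Suc (Suc k) * h''"
      using t \<open>h' = P * h''\<close> by simp
    ultimately show ?case
      by blast
  qed
  obtain k where "j = Suc k"
    using \<open>j \<ge> 1\<close> not0_implies_Suc by fastforce
  with lift obtain x h where "[x = x0] (mod P)" "A * x ^ 3 + B = P ^ j * h"
    by blast
  then show ?thesis
    using cube_hensel_step[OF unit] \<open>j \<ge> 1\<close> by blast
qed

section \<open>Density of the ratio set\<close>

lemma diagonal_cubic_value_with_residue: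
  fixes P a b c e :: int and j :: nat
  assumes P: "prime P" "P \<noteq> 3" and abc: "\<not> P dvd a" "\<not> P dvd b" "\<not> P dvd c" and "j \<ge> 1"
  shows "\<exists>x y z h. a * x ^ 3 + b * y ^ 3 + c * z ^ 3 = P ^ j * h \<and> [h = e] (mod P)"
proof -
  obtain x0 y0 z0 where nontrivial: "\<not> (P dvd x0 \<and> P dvd y0 \<and> P dvd z0)"
    and zero: "P dvd a * x0 ^ 3 + b * y0 ^ 3 + c * z0 ^ 3"
    using diagonal_cubic_zero_mod_prime[OF P(1) abc] by blast
  consider "\<not> P dvd x0" | "\<not> P dvd y0" | "\<not> P dvd z0"
    using nontrivial by blast
  then show ?thesis
  proof cases
    case 1
    have "P dvd a * x0 ^ 3 + (b * y0 ^ 3 + c * z0 ^ 3)"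
      using zero by (simp add: ac_simps)
    from cube_hensel_lift[OF P abc(1) 1 this \<open>j \<ge> 1\<close>, of e] obtain x h
      where "a * x ^ 3 + (b * y0 ^ 3 + c * z0 ^ 3) = P ^ j * h" "[h = e] (mod P)"
      by blast
    then show ?thesis
      by (metis add.assoc)
  next
    case 2
    have "P dvd b * y0 ^ 3 + (a * x0 ^ 3 + c * z0 ^ 3)"
      using zero by (simp add: ac_simps)
    from cube_hensel_lift[OF P abc(2) 2 this \<open>j \<ge> 1\<close>, of e] obtain y h
      where "b * y ^ 3 + (a * x0 ^ 3 + c * z0 ^ 3) = P ^ j * h" "[h = e] (mod P)"
      by blast
    then show ?thesis
      by (metis add.assoc add.commute)
  next
    case 3
    have "P dvd c * z0 ^ 3 + (a * x0 ^ 3 + b * y0 ^ 3)"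
      using zero by (simp add: ac_simps)
    from cube_hensel_lift[OF P abc(3) 3 this \<open>j \<ge> 1\<close>, of e] obtain z h
      where "c * z ^ 3 + (a * x0 ^ 3 + b * y0 ^ 3) = P ^ j * h" "[h = e] (mod P)"
      by blast
    then show ?thesis
      by (metis add.commute)
  qed
qed

lemma diagonal_cubic_approximates_multiples:
  fixes P a b c M :: int and n :: nat
  assumes P: "prime P" "P \<noteq> 3" and abc: "\<not> P dvd a" "\<not> P dvd b" "\<not> P dvd c" and "P dvd M"
  shows "\<exists>x y z. P ^ n dvd a * x ^ 3 + b * y ^ 3 + c * z ^ 3 - M"
proof (cases "M = 0")
  case True
  then show ?thesis
    by (intro exI[of _ 0]) simp
next
  case False
  have "\<not> is_unit P"
    using P(1) by (simp add: prime_int_iff)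
  define \<alpha> where "\<alpha> = multiplicity P M"
  obtain m where M: "M = P ^ \<alpha> * m" and m: "\<not> P dvd m"
    using multiplicity_decompose'[OF False \<open>\<not> is_unit P\<close>] unfolding \<alpha>_def by blast
  have "\<alpha> \<ge> 1"
    using multiplicity_geI[OF False \<open>\<not> is_unit P\<close>, of 1] \<open>P dvd M\<close> by (simp add: \<alpha>_def)
  define t where "t = (\<alpha> - 1) div 3"
  define j where "j = (\<alpha> - 1) mod 3 + 1"
  have \<alpha>: "\<alpha> = 3 * t + j" and "j \<ge> 1"
    using \<open>\<alpha> \<ge> 1\<close> by (simp_all add: t_def j_def)
  obtain x0 y0 z0 h where F0: "a * x0 ^ 3 + b * y0 ^ 3 + c * z0 ^ 3 = P ^ j * h"
    and h: "[h = m] (mod P)"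
    using diagonal_cubic_value_with_residue[OF P abc \<open>j \<ge> 1\<close>] by blast
  have "\<not> P dvd h"
    using h m cong_dvd_iff by blast
  moreover have "P dvd h * 1 ^ 3 + - m"
    using h by (simp add: cong_iff_dvd_diff)
  moreover have "\<not> P dvd 1"
    using P(1) by (simp add: prime_int_iff)
  ultimately obtain s g where s: "h * s ^ 3 + - m = P ^ Suc n * g"
    using cube_hensel_lift[OF P, of h 1 "- m" "Suc n" 0] by auto
  define k where "k = s * P ^ t"
  have "a * (k * x0) ^ 3 + b * (k * y0) ^ 3 + c * (k * z0) ^ 3 - M
      = k ^ 3 * (a * x0 ^ 3 + b * y0 ^ 3 + c * z0 ^ 3) - M"
    by (simp add: power_mult_distrib algebra_simps)
  also have "\<dots> = P ^ \<alpha> * (h * s ^ 3 + - m)"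
    unfolding F0 k_def M \<alpha> by (simp add: power_mult_distrib power_add algebra_simps flip: power_mult)
  also have "\<dots> = P ^ n * (P ^ \<alpha> * P * g)"
    unfolding s by (simp add: ac_simps)
  finally show ?thesis
    by (metis dvd_triv_left)
qed

lemma padic_val_rat_of_int_div:
  fixes p :: nat and A B :: int
  assumes p: "prime p" and "A \<noteq> 0" "B \<noteq> 0"
  shows "padic_val_rat p (of_int A / of_int B)
    = int (multiplicity (int p) A) - int (multiplicity (int p) B)"
proof -
  obtain n d where q: "quotient_of (of_int A / of_int B) = (n, d)"
    by (cases "quotient_of (of_int A / of_int B)") auto
  have "d > 0"
    using quotient_of_denom_pos[OF q] .
  have "(of_int A / of_int B :: rat) = of_int n / of_int d"
    using quotient_of_div[OF q] .
  then have "A * d = n * B"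
    using \<open>B \<noteq> 0\<close> \<open>d > 0\<close> by (simp add: field_simps flip: of_int_mult)
  then have "n \<noteq> 0"
    using \<open>A \<noteq> 0\<close> \<open>d > 0\<close> by auto
  have "prime_elem (int p)"
    using p by simp
  then have "multiplicity (int p) A + multiplicity (int p) d
      = multiplicity (int p) n + multiplicity (int p) B"
    using \<open>A * d = n * B\<close> \<open>A \<noteq> 0\<close> \<open>B \<noteq> 0\<close> \<open>n \<noteq> 0\<close> \<open>d > 0\<close>
    by (metis prime_elem_multiplicity_mult_distrib less_irrefl)
  then show ?thesis
    unfolding padic_val_rat_def q by simp
qed

lemma padic_val_rat_of_int_div_ge:
  fixes p :: nat and n D E :: int
  assumes p: "prime p" and "D \<noteq> 0" and "E \<noteq> 0"
    and "int p ^ nat (n + multiplicity (int p) E) dvd D"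
  shows "n \<le> padic_val_rat p (of_int D / of_int E)"
proof -
  have "\<not> is_unit (int p)"
    using prime_gt_1_nat[OF p] by simp
  then have "nat (n + multiplicity (int p) E) \<le> multiplicity (int p) D"
    using multiplicity_geI assms(2,4) by blast
  then show ?thesis
    using padic_val_rat_of_int_div[OF assms(1-3)] by linarith
qed

lemma ratio_setI:
  "F y1 y2 y3 \<noteq> 0 \<Longrightarrow> of_int (F x1 x2 x3) / of_int (F y1 y2 y3) \<in> ratio_set F"
  unfolding ratio_set_def by blast

lemma ratio_set_approximates:
  fixes p :: nat and F :: "int \<Rightarrow> int \<Rightarrow> int \<Rightarrow> int" and M :: int and n :: int
  assumes p: "prime p" and E: "F y1 y2 y3 \<noteq> 0"
    and approx: "int p ^ nat (n + multiplicity (int p) (F y1 y2 y3)) dvd F x1 x2 x3 - M"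
  shows "\<exists>r \<in> ratio_set F. r = of_int M / of_int (F y1 y2 y3)
    \<or> n \<le> padic_val_rat p (r - of_int M / of_int (F y1 y2 y3))"
proof -
  define r :: rat where "r = of_int (F x1 x2 x3) / of_int (F y1 y2 y3)"
  have "r - of_int M / of_int (F y1 y2 y3) = of_int (F x1 x2 x3 - M) / of_int (F y1 y2 y3)"
    using E by (simp add: r_def diff_divide_distrib)
  moreover have "F x1 x2 x3 - M = 0 \<or> n \<le> padic_val_rat p (of_int (F x1 x2 x3 - M) / of_int (F y1 y2 y3))"
    using padic_val_rat_of_int_div_ge[OF p _ E approx] by blast
  ultimately have "r = of_int M / of_int (F y1 y2 y3)
    \<or> n \<le> padic_val_rat p (r - of_int M / of_int (F y1 y2 y3))"
    by auto
  moreover have "r \<in> ratio_set F"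
    unfolding r_def using E by (rule ratio_setI)
  ultimately show ?thesis
    by blast
qed

theorem theorem1p5:
  fixes p :: nat and a b c :: int
  assumes "prime p" and "p \<noteq> 3" and "\<not> int p dvd a * b * c"
  shows "padic_dense p (ratio_set (\<lambda>x y z. a * x ^ 3 + b * y ^ 3 + c * z ^ 3))"
proof -
  define F where "F = (\<lambda>x y z. a * x ^ 3 + b * y ^ 3 + c * z ^ 3)"
  define P where "P = int p"
  have P: "prime P" "P \<noteq> 3" and abc: "\<not> P dvd a" "\<not> P dvd b" "\<not> P dvd c"
    using assms by (auto simp: P_def)
  have "\<exists>r \<in> ratio_set F. r = q \<or> n \<le> padic_val_rat p (r - q)" for q :: rat and n :: int
  proof -
    obtain A B where "q = of_int A / of_int B" and "B > 0"
      by (metis prod.exhaust quotient_of_denom_pos quotient_of_div)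
    define E where "E = F (P * B) 0 0"
    have "E \<noteq> 0"
      using abc(1) P(1) \<open>B > 0\<close> by (auto simp: E_def F_def)
    have q: "q = of_int (a * P ^ 3 * A * B\<^sup>2) / of_int E"
      using \<open>q = _\<close> \<open>B > 0\<close> \<open>E \<noteq> 0\<close> by (simp add: E_def F_def field_simps power2_eq_square power3_eq_cube)
    have "P dvd a * P ^ 3 * A * B\<^sup>2"
      by (simp add: power3_eq_cube)
    then obtain x y z where "P ^ nat (n + multiplicity P E) dvd F x y z - a * P ^ 3 * A * B\<^sup>2"
      using diagonal_cubic_approximates_multiples[OF P abc] unfolding F_def by blast
    then show ?thesis
      using ratio_set_approximates[OF assms(1), of F "P * B" 0 0] \<open>E \<noteq> 0\<close>
      unfolding q E_def P_def by blast
  qed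
  then show ?thesis
    unfolding padic_dense_def F_def by blast
qed

end
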